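(* Let $(A,\cdot,\alpha_A)$ and $(B,\circ,\alpha_B)$ be nearly Hom-associative algebras over a field $\mathbb{K}$ of characteristic $0$. Suppose there are linear maps $l_A,r_A:A\to\mathrm{End}(B)$ and $l_B,r_B:B\to\mathrm{End}(A)$ such that $(l_A,r_A,B,\alpha_B)$ is a bimodule of $(A,\cdot,\alpha_A)$, $(l_B,r_B,A,\alpha_A)$ is a bimodule of $(B,\circ,\alpha_B)$, and for all $x,y\in A$, $a,b\in B$: \begin{align*} &\alpha_A(x)\cdot(r_B(a)y)+r_B(l_A(y)a)\alpha_A(x)-(l_B(a)x)\cdot\alpha_A(y)-l_B(r_A(x)a)\alpha_A(y)=0,\\ &\alpha_A(x)\cdot(l_B(a)y)+r_B(r_A(y)a)\alpha_A(x)-r_B(\alpha_B(a))(y\cdot x)=0,\\ &l_B(\alpha_B(a))(x\cdot y)-(r_B(a)y)\cdot\alpha_A(x)-l_B(l_A(y)a)\alpha_A(x)=0,\\ &\alpha_B(a)\circ(r_A(x)b)+r_A(l_B(b)x)\alpha_B(a)-(l_A(x)a)\circ\alpha_B(b)-l_A(r_B(a)x)\alpha_B(b)=0,\\ &\alpha_B(a)\circ(l_A(x)b)+r_A(r_B(b)x)\alpha_B(a)-r_A(\alpha_A(x))(b\circ a)=0,\\ &l_A(\alpha_A(x))(b\circ a)-(r_A(x)a)\circ\alpha_B(b)-l_A(l_B(a)x)\alpha_B(b)=0. \end{align*} Then, with the product $(x+a)\ast(y+b)=(x\cdot y+l_B(a)y+r_B(b)x)+(a\circ b+l_A(x)b+r_A(y)a)$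 on $A\oplus B$, the triple $(A\oplus B,\ast,\alpha_A\oplus\alpha_B)$ is a nearly Hom-associative algebra.
   Context: A nearly Hom-associative algebra is a triple $(A,\cdot,\alpha)$ with bilinear product $\cdot$ and linear $\alpha:A\to A$ such that $\alpha(x)\cdot(y\cdot z)=(z\cdot x)\cdot\alpha(y)$ for all $x,y,z$. A bimodule of $(A,\cdot,\alpha)$ is a quadruple $(l,r,V,\varphi)$ with $V$ a linear space, $l,r:A\to\mathrm{End}(V)$ linear and $\varphi\in\mathrm{End}(V)$ such that for all $x,y\in A$: $\varphi\circ l(x)=l(\alpha(x))\circ\varphi$, $\varphi\circ r(x)=r(\alpha(x))\circ\varphi$, $l(\alpha(x))\circ l(y)=r(\alpha(y))\circ r(x)$, $l(\alpha(x))\circ r(y)=l(y\cdot x)\circ\varphi$, $r(\alpha(x))\circ l(y)=r(x\cdot y)\circ\varphi$. $(\alpha_A\oplus\alpha_B)(x+a)=\alpha_A(x)+\alpha_B(a)$. *)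

theory Defs
  imports Complex_Main "HOL-Library.Product_Plus"
begin

definition nearly_hom_assoc ::
  "('k::field \<Rightarrow> 'a::ab_group_add \<Rightarrow> 'a) \<Rightarrow> ('a \<Rightarrow> 'a \<Rightarrow> 'a) \<Rightarrow> ('a \<Rightarrow> 'a) \<Rightarrow> bool" where
  "nearly_hom_assoc s mult alpha \<longleftrightarrow>
     vector_space s \<and>
     (\<forall>x. Vector_Spaces.linear s s (mult x)) \<and>
     (\<forall>y. Vector_Spaces.linear s s (\<lambda>x. mult x y)) \<and>
     Vector_Spaces.linear s s alpha \<and>
     (\<forall>x y z. mult (alpha x) (mult y z) = mult (mult z x) (alpha y))"

definition bimodule ::
  "('k::field \<Rightarrow> 'a::ab_group_add \<Rightarrow> 'a) \<Rightarrow> ('a \<Rightarrow> 'a \<Rightarrow> 'a) \<Rightarrow> ('a \<Rightarrow> 'a) \<Rightarrow>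
   ('k \<Rightarrow> 'v::ab_group_add \<Rightarrow> 'v) \<Rightarrow> ('a \<Rightarrow> 'v \<Rightarrow> 'v) \<Rightarrow> ('a \<Rightarrow> 'v \<Rightarrow> 'v) \<Rightarrow> ('v \<Rightarrow> 'v) \<Rightarrow> bool" where
  "bimodule sA mult alpha sV l r phi \<longleftrightarrow>
     vector_space sV \<and>
     (\<forall>x. Vector_Spaces.linear sV sV (l x)) \<and>
     (\<forall>v. Vector_Spaces.linear sA sV (\<lambda>x. l x v)) \<and>
     (\<forall>x. Vector_Spaces.linear sV sV (r x)) \<and>
     (\<forall>v. Vector_Spaces.linear sA sV (\<lambda>x. r x v)) \<and>
     Vector_Spaces.linear sV sV phi \<and>
     (\<forall>x y.
        phi \<circ> l x = l (alpha x) \<circ> phi \<and>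
        phi \<circ> r x = r (alpha x) \<circ> phi \<and>
        l (alpha x) \<circ> l y = r (alpha y) \<circ> r x \<and>
        l (alpha x) \<circ> r y = l (mult y x) \<circ> phi \<and>
        r (alpha x) \<circ> l y = r (mult x y) \<circ> phi)"

definition sum_scale :: "('k \<Rightarrow> 'a \<Rightarrow> 'a) \<Rightarrow> ('k \<Rightarrow> 'b \<Rightarrow> 'b) \<Rightarrow> 'k \<Rightarrow> 'a \<times> 'b \<Rightarrow> 'a \<times> 'b" where
  "sum_scale sA sB c p = (sA c (fst p), sB c (snd p))"

definition sum_map :: "('a \<Rightarrow> 'a) \<Rightarrow> ('b \<Rightarrow> 'b) \<Rightarrow> 'a \<times> 'b \<Rightarrow> 'a \<times> 'b" where
  "sum_map f g p = (f (fst p), g (snd p))"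

definition matched_prod ::
  "('a::ab_group_add \<Rightarrow> 'a \<Rightarrow> 'a) \<Rightarrow> ('b::ab_group_add \<Rightarrow> 'b \<Rightarrow> 'b) \<Rightarrow>
   ('a \<Rightarrow> 'b \<Rightarrow> 'b) \<Rightarrow> ('a \<Rightarrow> 'b \<Rightarrow> 'b) \<Rightarrow> ('b \<Rightarrow> 'a \<Rightarrow> 'a) \<Rightarrow> ('b \<Rightarrow> 'a \<Rightarrow> 'a) \<Rightarrow>
   'a \<times> 'b \<Rightarrow> 'a \<times> 'b \<Rightarrow> 'a \<times> 'b" where
  "matched_prod multA multB lA rA lB rB p q =
     (let x = fst p; a = snd p; y = fst q; b = snd q in
      (multA x y + lB a y + rB b x, multB a b + lA x b + rA y a))"

end

theory Submission
  imports Defs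
begin

text \<open>Expanding
  the Hom-associativity identity of A \<oplus> B, its A-component consists of nine terms on
  each side; they match up by Hom-associativity of A, the three bimodule identities of
  (lB, rB), and the three compatibility conditions c1-c3. Exchanging the two summands
  maps the product of A \<oplus> B to that of B \<oplus> A and c1-c3 to c4-c6, so the B-component
  is the same computation with the roles of A and B exchanged.\<close>

definition bilinear_wrt ::
  "('k::field \<Rightarrow> 'a::ab_group_add \<Rightarrow> 'a) \<Rightarrow> ('k \<Rightarrow> 'b::ab_group_add \<Rightarrow> 'b) \<Rightarrow>
   ('k \<Rightarrow> 'c::ab_group_add \<Rightarrow> 'c) \<Rightarrow> ('a \<Rightarrow> 'b \<Rightarrow> 'c) \<Rightarrow> bool"
  where "bilinear_wrt s1 s2 s3 f \<longleftrightarrow>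
    (\<forall>x. Vector_Spaces.linear s2 s3 (f x)) \<and> (\<forall>y. Vector_Spaces.linear s1 s3 (\<lambda>x. f x y))"

lemma nearly_hom_assoc_bilinear:
  "nearly_hom_assoc s mult alpha \<Longrightarrow> bilinear_wrt s s s mult"
  unfolding nearly_hom_assoc_def bilinear_wrt_def by blast

lemma bimodule_bilinear:
  assumes "bimodule sA mult alpha sV l r phi"
  shows "bilinear_wrt sA sV sV l" and "bilinear_wrt sA sV sV r"
  using assms unfolding bimodule_def bilinear_wrt_def by blast+

lemma vector_space_sum_scale:
  "vector_space sA \<Longrightarrow> vector_space sB \<Longrightarrow> vector_space (sum_scale sA sB)"
  unfolding vector_space_def sum_scale_def by auto

lemma linear_sum_map:
  assumes "Vector_Spaces.linear sA sA f" and "Vector_Spaces.linear sB sB g"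
  shows "Vector_Spaces.linear (sum_scale sA sB) (sum_scale sA sB) (sum_map f g)"
  using assms vector_space_sum_scale
  unfolding Vector_Spaces.linear_iff by (auto simp: sum_map_def sum_scale_def)

lemma linear_matched_prod:
  assumes "bilinear_wrt sA sA sA multA" and "bilinear_wrt sB sB sB multB"
    and "bilinear_wrt sA sB sB lA" and "bilinear_wrt sA sB sB rA"
    and "bilinear_wrt sB sA sA lB" and "bilinear_wrt sB sA sA rB"
  shows "Vector_Spaces.linear (sum_scale sA sB) (sum_scale sA sB)
           (matched_prod multA multB lA rA lB rB p)"
    and "Vector_Spaces.linear (sum_scale sA sB) (sum_scale sA sB)
           (\<lambda>p. matched_prod multA multB lA rA lB rB p q)"
proof -
  have vA: "vector_space sA" and vB: "vector_space sB"
    using assms(1,2) by (auto simp: bilinear_wrt_def Vector_Spaces.linear_iff)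
  interpret vsA: vector_space sA by (rule vA)
  interpret vsB: vector_space sB by (rule vB)
  note maps_linear = assms[unfolded bilinear_wrt_def Vector_Spaces.linear_iff]
  show "Vector_Spaces.linear (sum_scale sA sB) (sum_scale sA sB)
          (matched_prod multA multB lA rA lB rB p)"
    and "Vector_Spaces.linear (sum_scale sA sB) (sum_scale sA sB)
          (\<lambda>p. matched_prod multA multB lA rA lB rB p q)"
    using maps_linear vector_space_sum_scale[OF vA vB]
    by (auto simp: Vector_Spaces.linear_iff matched_prod_def sum_scale_def Let_def
        vsA.scale_right_distrib vsB.scale_right_distrib algebra_simps)
qed

lemma swap_matched_prod:
  "matched_prod multB multA lB rB lA rA (prod.swap p) (prod.swap q) =
   prod.swap (matched_prod multA multB lA rA lB rB p q)"
  by (simp add: matched_prod_def Let_def)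

lemma swap_sum_map: "sum_map g f (prod.swap p) = prod.swap (sum_map f g p)"
  by (simp add: sum_map_def)

lemma fst_matched_prod_hom_assoc:
  fixes sA :: "'k::field \<Rightarrow> 'a::ab_group_add \<Rightarrow> 'a"
    and sB :: "'k \<Rightarrow> 'b::ab_group_add \<Rightarrow> 'b"
  assumes hA: "nearly_hom_assoc sA multA alphaA"
    and bB: "bimodule sB multB alphaB sA lB rB alphaA"
    and c1: "\<And>x y a. multA (alphaA x) (rB a y) + rB (lA y a) (alphaA x)
                - multA (lB a x) (alphaA y) - lB (rA x a) (alphaA y) = 0"
    and c2: "\<And>x y a. multA (alphaA x) (lB a y) + rB (rA y a) (alphaA x)
                - rB (alphaB a) (multA y x) = 0"
    and c3: "\<And>x y a. lB (alphaB a) (multA x y) - multA (rB a y) (alphaA x)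
                - lB (lA y a) (alphaA x) = 0"
  shows "fst (matched_prod multA multB lA rA lB rB (sum_map alphaA alphaB X)
                (matched_prod multA multB lA rA lB rB Y Z)) =
         fst (matched_prod multA multB lA rA lB rB (matched_prod multA multB lA rA lB rB Z X)
                (sum_map alphaA alphaB Y))"
proof -
  note hA' = hA[unfolded nearly_hom_assoc_def Vector_Spaces.linear_iff]
  note bB' = bB[unfolded bimodule_def Vector_Spaces.linear_iff fun_eq_iff comp_def]
  have additive:
    "\<And>x y z. multA x (y + z) = multA x y + multA x z"
    "\<And>x y z. multA (y + z) x = multA y x + multA z x"
    "\<And>a x y. lB a (x + y) = lB a x + lB a y"
    "\<And>a b x. lB (a + b) x = lB a x + lB b x"
    "\<And>a x y. rB a (x + y) = rB a x + rB a y"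
    "\<And>a b x. rB (a + b) x = rB a x + rB b x"
    using hA' bB' by auto
  have assoc: "\<And>x y z. multA (alphaA x) (multA y z) = multA (multA z x) (alphaA y)"
    using hA' by auto
  have bimod:
    "\<And>a b x. lB (alphaB a) (lB b x) = rB (alphaB b) (rB a x)"
    "\<And>a b x. lB (alphaB a) (rB b x) = lB (multB b a) (alphaA x)"
    "\<And>a b x. rB (alphaB a) (lB b x) = rB (multB a b) (alphaA x)"
    using bB' by auto
  have compat:
    "\<And>x y a. multA (alphaA x) (rB a y)
       = multA (lB a x) (alphaA y) + lB (rA x a) (alphaA y) - rB (lA y a) (alphaA x)"
    "\<And>x y a. multA (alphaA x) (lB a y) = rB (alphaB a) (multA y x) - rB (rA y a) (alphaA x)"
    "\<And>x y a. lB (alphaB a) (multA x y) = multA (rB a y) (alphaA x) + lB (lA y a) (alphaA x)"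
    using c1 c2 c3 by (simp_all add: algebra_simps)
  show ?thesis
    by (simp add: matched_prod_def sum_map_def Let_def additive assoc bimod compat algebra_simps)
qed

lemma matched_prod_hom_assoc:
  fixes sA :: "'k::field \<Rightarrow> 'a::ab_group_add \<Rightarrow> 'a"
    and sB :: "'k \<Rightarrow> 'b::ab_group_add \<Rightarrow> 'b"
  assumes hA: "nearly_hom_assoc sA multA alphaA"
    and hB: "nearly_hom_assoc sB multB alphaB"
    and bA: "bimodule sA multA alphaA sB lA rA alphaB"
    and bB: "bimodule sB multB alphaB sA lB rB alphaA"
    and c1: "\<And>x y a. multA (alphaA x) (rB a y) + rB (lA y a) (alphaA x)
                - multA (lB a x) (alphaA y) - lB (rA x a) (alphaA y) = 0"
    and c2: "\<And>x y a. multA (alphaA x) (lB a y) + rB (rA y a) (alphaA x)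
                - rB (alphaB a) (multA y x) = 0"
    and c3: "\<And>x y a. lB (alphaB a) (multA x y) - multA (rB a y) (alphaA x)
                - lB (lA y a) (alphaA x) = 0"
    and c4: "\<And>x a b. multB (alphaB a) (rA x b) + rA (lB b x) (alphaB a)
                - multB (lA x a) (alphaB b) - lA (rB a x) (alphaB b) = 0"
    and c5: "\<And>x a b. multB (alphaB a) (lA x b) + rA (rB b x) (alphaB a)
                - rA (alphaA x) (multB b a) = 0"
    and c6: "\<And>x a b. lA (alphaA x) (multB b a) - multB (rA x a) (alphaB b)
                - lA (lB a x) (alphaB b) = 0"
  shows "matched_prod multA multB lA rA lB rB (sum_map alphaA alphaB X)
           (matched_prod multA multB lA rA lB rB Y Z) =
         matched_prod multA multB lA rA lB rB (matched_prod multA multB lA rA lB rB Z X)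
           (sum_map alphaA alphaB Y)"
proof (rule prod_eqI)
  show "fst (matched_prod multA multB lA rA lB rB (sum_map alphaA alphaB X)
              (matched_prod multA multB lA rA lB rB Y Z)) =
        fst (matched_prod multA multB lA rA lB rB (matched_prod multA multB lA rA lB rB Z X)
              (sum_map alphaA alphaB Y))"
    using hA bB c1 c2 c3 by (rule fst_matched_prod_hom_assoc)
  have "fst (matched_prod multB multA lB rB lA rA (sum_map alphaB alphaA (prod.swap X))
              (matched_prod multB multA lB rB lA rA (prod.swap Y) (prod.swap Z))) =
        fst (matched_prod multB multA lB rB lA rA
              (matched_prod multB multA lB rB lA rA (prod.swap Z) (prod.swap X))
              (sum_map alphaB alphaA (prod.swap Y)))"
    using hB bA c4 c5 c6 by (rule fst_matched_prod_hom_assoc)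
  then show "snd (matched_prod multA multB lA rA lB rB (sum_map alphaA alphaB X)
              (matched_prod multA multB lA rA lB rB Y Z)) =
        snd (matched_prod multA multB lA rA lB rB (matched_prod multA multB lA rA lB rB Z X)
              (sum_map alphaA alphaB Y))"
    by (simp add: swap_sum_map swap_matched_prod)
qed

theorem mainTheorem13:
  fixes sA :: "'k::field_char_0 \<Rightarrow> 'a::ab_group_add \<Rightarrow> 'a"
    and sB :: "'k \<Rightarrow> 'b::ab_group_add \<Rightarrow> 'b"
    and multA :: "'a \<Rightarrow> 'a \<Rightarrow> 'a" and alphaA :: "'a \<Rightarrow> 'a"
    and multB :: "'b \<Rightarrow> 'b \<Rightarrow> 'b" and alphaB :: "'b \<Rightarrow> 'b"
    and lA rA :: "'a \<Rightarrow> 'b \<Rightarrow> 'b" and lB rB :: "'b \<Rightarrow> 'a \<Rightarrow> 'a"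
  assumes hA: "nearly_hom_assoc sA multA alphaA"
    and hB: "nearly_hom_assoc sB multB alphaB"
    and bA: "bimodule sA multA alphaA sB lA rA alphaB"
    and bB: "bimodule sB multB alphaB sA lB rB alphaA"
    and c1: "\<And>x y a. multA (alphaA x) (rB a y) + rB (lA y a) (alphaA x)
                - multA (lB a x) (alphaA y) - lB (rA x a) (alphaA y) = 0"
    and c2: "\<And>x y a. multA (alphaA x) (lB a y) + rB (rA y a) (alphaA x)
                - rB (alphaB a) (multA y x) = 0"
    and c3: "\<And>x y a. lB (alphaB a) (multA x y) - multA (rB a y) (alphaA x)
                - lB (lA y a) (alphaA x) = 0"
    and c4: "\<And>x a b. multB (alphaB a) (rA x b) + rA (lB b x) (alphaB a)
                - multB (lA x a) (alphaB b) - lA (rB a x) (alphaB b) = 0"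
    and c5: "\<And>x a b. multB (alphaB a) (lA x b) + rA (rB b x) (alphaB a)
                - rA (alphaA x) (multB b a) = 0"
    and c6: "\<And>x a b. lA (alphaA x) (multB b a) - multB (rA x a) (alphaB b)
                - lA (lB a x) (alphaB b) = 0"
  shows "nearly_hom_assoc (sum_scale sA sB) (matched_prod multA multB lA rA lB rB)
           (sum_map alphaA alphaB)"
proof -
  have "vector_space (sum_scale sA sB)"
    using hA hB by (intro vector_space_sum_scale) (simp_all add: nearly_hom_assoc_def)
  moreover have "Vector_Spaces.linear (sum_scale sA sB) (sum_scale sA sB) (sum_map alphaA alphaB)"
    using hA hB by (intro linear_sum_map) (simp_all add: nearly_hom_assoc_def)
  moreover note linear_matched_prod[OF nearly_hom_assoc_bilinear[OF hA]
      nearly_hom_assoc_bilinear[OF hB] bimodule_bilinear[OF bA] bimodule_bilinear[OF bB]]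
  moreover note matched_prod_hom_assoc[OF hA hB bA bB c1 c2 c3 c4 c5 c6]
  ultimately show ?thesis
    unfolding nearly_hom_assoc_def by blast
qed

end
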